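(* Consider $f(x)=x^2+x$ as a map $\mathbb{Z}_2\to\mathbb{Z}_2$. Then $0$ is a fixed point, $f(1+2\mathbb{Z}_2)\subset 2\mathbb{Z}_2$, and $$2\mathbb{Z}_2=\{0\}\sqcup\Big(\bigsqcup_{n\ge2}\big(2^{n-1}+2^n\mathbb{Z}_2\big)\Big),$$ where for each $n\ge2$ the set $2^{n-1}+2^n\mathbb{Z}_2$ is the disjoint union of the $2^{n-2}$ minimal components $$2^{n-1}+t2^n+2^{2n-2}\mathbb{Z}_2,\qquad t=0,\dots,2^{n-2}-1.$$
   Context: A minimal component of $f$ is a clopen set $E\subset\mathbb{Z}_2$ with $f(E)\subset E$ such that $f:E\to E$ is minimal (every orbit in $E$ is dense in $E$). *)

theory Defs
  imports Main
begin

text \<open>The 2-adic integers Z_2, as the inverse limit of Z/2^n Z: compatible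
  sequences of residues x n in {0..<2^n} with x (n+1) mod 2^n = x n.\<close>

typedef z2 = "{x :: nat \<Rightarrow> int. \<forall>n. 0 \<le> x n \<and> x n < 2^n \<and> x (Suc n) mod 2^n = x n}"
  by (rule exI[of _ "\<lambda>_. 0"]) simp

definition res :: "z2 \<Rightarrow> nat \<Rightarrow> int" where
  "res x n = Rep_z2 x n"

definition z2_of_int :: "int \<Rightarrow> z2" where
  "z2_of_int a = Abs_z2 (\<lambda>n. a mod 2^n)"

definition z2_add :: "z2 \<Rightarrow> z2 \<Rightarrow> z2" where
  "z2_add x y = Abs_z2 (\<lambda>n. (res x n + res y n) mod 2^n)"

definition z2_mul :: "z2 \<Rightarrow> z2 \<Rightarrow> z2" where
  "z2_mul x y = Abs_z2 (\<lambda>n. (res x n * res y n) mod 2^n)"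

definition fsq :: "z2 \<Rightarrow> z2" where
  "fsq x = z2_add (z2_mul x x) x"

definition coset :: "int \<Rightarrow> nat \<Rightarrow> z2 set" where
  "coset a m = {z2_add (z2_of_int a) (z2_mul (z2_of_int (2^m)) y) | y. True}"

definition z2_open :: "z2 set \<Rightarrow> bool" where
  "z2_open U \<longleftrightarrow> (\<forall>x\<in>U. \<exists>n. {y. res y n = res x n} \<subseteq> U)"

definition z2_clopen :: "z2 set \<Rightarrow> bool" where
  "z2_clopen E \<longleftrightarrow> z2_open E \<and> z2_open (- E)"

definition z2_dense_in :: "z2 set \<Rightarrow> z2 set \<Rightarrow> bool" where
  "z2_dense_in S E \<longleftrightarrow> S \<subseteq> E \<and> (\<forall>y\<in>E. \<forall>n. \<exists>s\<in>S. res s n = res y n)"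

definition orbit :: "(z2 \<Rightarrow> z2) \<Rightarrow> z2 \<Rightarrow> z2 set" where
  "orbit f x = {(f ^^ k) x | k. True}"

definition minimal_component :: "(z2 \<Rightarrow> z2) \<Rightarrow> z2 set \<Rightarrow> bool" where
  "minimal_component f E \<longleftrightarrow> z2_clopen E \<and> f ` E \<subseteq> E \<and>
     (\<forall>x\<in>E. z2_dense_in (orbit f x) E)"

end

theory Submission
  imports Defs
begin

text \<open>Modulo powers of 2, f(x) = x + x^2. If x = 2^m u with u odd and m \<ge> 1, then
  f(x) - x = x^2 has exact valuation 2m, so f preserves the class of x modulo 2^{2m}.
  The key fact is that f^{2^k}(x) - x has exact valuation 2m + k; it passes from k to
  k + 1 because two orbits whose starting points differ by d, with 4 | d, stay
  congruent to d modulo 4d. Hence f^{2^k} moves every point of a class modulo 2^{2m+k}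
  into the other half of that class modulo 2^{2m+k+1}, and by induction on k each
  point reaches every class modulo 2^{2m+k} inside its class modulo 2^{2m}: all orbits
  are dense.\<close>

lemma res_nonneg: "0 \<le> res x n"
  and res_less: "res x n < 2^n"
  and res_Suc_mod: "res x (Suc n) mod 2^n = res x n"
  using Rep_z2[of x] by (auto simp: res_def)

lemma res_mod [simp]: "res x n mod 2^n = res x n"
  using res_nonneg res_less by simp

lemma res_mod_pow2: "n \<le> m \<Longrightarrow> res x m mod 2^n = res x n"
proof (induction m rule: dec_induct)
  case base
  then show ?case by simp
next
  case (step m)
  have "res x (Suc m) mod 2^n = res x (Suc m) mod 2^m mod 2^n"
    using step(1) by (simp add: mod_mod_cancel le_imp_power_dvd)
  also have "\<dots> = res x n" using res_Suc_mod step.IH by simp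
  finally show ?case .
qed

lemma z2_eqI: "(\<And>n. res x n = res y n) \<Longrightarrow> x = y"
  by (metis Rep_z2_inject ext res_def)

lemma res_Abs_z2:
  assumes "\<And>n. p (Suc n) mod 2^n = p n mod (2::int)^n"
  shows "res (Abs_z2 (\<lambda>n. p n mod 2^n)) n = p n mod 2^n"
proof -
  have "p (Suc n) mod 2^Suc n mod 2^n = p n mod 2^n" for n
    using assms by (simp add: mod_mod_cancel)
  then have "(\<lambda>n. p n mod 2^n) \<in> {x. \<forall>n. 0 \<le> x n \<and> x n < 2^n \<and> x (Suc n) mod 2^n = x n}"
    by simp
  then show ?thesis by (simp add: res_def Abs_z2_inverse)
qed

lemma res_z2_of_int [simp]: "res (z2_of_int a) n = a mod 2^n"
  unfolding z2_of_int_def by (rule res_Abs_z2) simp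

lemma res_z2_add [simp]: "res (z2_add x y) n = (res x n + res y n) mod 2^n"
  unfolding z2_add_def by (rule res_Abs_z2) (metis mod_add_eq res_Suc_mod)

lemma res_z2_mul [simp]: "res (z2_mul x y) n = (res x n * res y n) mod 2^n"
  unfolding z2_mul_def by (rule res_Abs_z2) (metis mod_mult_eq res_Suc_mod)

lemma div_pow2_mod_cong:
  fixes u w :: int
  assumes "2^m dvd u" "2^m dvd w" "2^(n + m) dvd u - w"
  shows "(u div 2^m) mod 2^n = (w div 2^m) mod 2^n"
proof -
  obtain e1 where e1: "u = 2^m * e1" using assms(1) by blast
  obtain e0 where e0: "w = 2^m * e0" using assms(2) by blast
  have "(2::int)^m * 2^n dvd 2^m * (e1 - e0)"
    using assms(3) by (simp add: e1 e0 power_add right_diff_distrib mult.commute[of "(2::int)^n"])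
  then have "(2::int)^n dvd e1 - e0" by simp
  then show ?thesis by (simp add: e1 e0 mod_eq_dvd_iff)
qed

lemma in_coset_if_res_eq:
  assumes zm: "res z m = a mod 2^m"
  shows "z \<in> coset a m"
proof -
  define q where "q n = (res z (n + m) - a) div 2^m" for n
  have dvd_q: "(2::int)^m dvd res z (n + m) - a" for n
    using res_mod_pow2[of m "n + m" z] zm by (simp add: mod_eq_dvd_iff)
  have "q (Suc n) mod 2^n = q n mod 2^n" for n
    unfolding q_def
  proof (rule div_pow2_mod_cong[OF dvd_q dvd_q])
    have "(2::int)^(n + m) dvd res z (Suc (n + m)) - res z (n + m)"
      by (metis mod_eq_dvd_iff res_Suc_mod res_mod)
    then show "2^(n + m) dvd res z (Suc n + m) - a - (res z (n + m) - a)" by simp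
  qed
  then have res_y: "res (Abs_z2 (\<lambda>n. q n mod 2^n)) n = q n mod 2^n" for n
    by (rule res_Abs_z2)
  have "z = z2_add (z2_of_int a) (z2_mul (z2_of_int (2^m)) (Abs_z2 (\<lambda>n. q n mod 2^n)))"
  proof (rule z2_eqI)
    fix n
    have "2^m * q n = res z (n + m) - a" unfolding q_def using dvd_q[of n] by simp
    then have "res z n = (a + 2^m * q n) mod 2^n"
      using res_mod_pow2[of n "n + m" z] by simp
    then show "res z n = res (z2_add (z2_of_int a) (z2_mul (z2_of_int (2^m)) (Abs_z2 (\<lambda>n. q n mod 2^n)))) n"
      by (simp add: res_y mod_add_eq mod_mult_eq)
  qed
  then show ?thesis unfolding coset_def by blast
qed

lemma coset_eq: "coset a m = {z. res z m = a mod 2^m}"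
  using in_coset_if_res_eq by (auto simp: coset_def mod_add_left_eq mod_mult_right_eq)

definition fsq_int :: "int \<Rightarrow> int" where
  "fsq_int x = x * x + x"

definition exact_pow2_dvd :: "nat \<Rightarrow> int \<Rightarrow> bool" where
  "exact_pow2_dvd m x \<longleftrightarrow> (\<exists>u. x = 2^m * u \<and> odd u)"

lemma fsq_int_minus_self: "fsq_int x - x = x * x"
  by (simp add: fsq_int_def)

lemma fsq_int_displacement:
  assumes "exact_pow2_dvd m x"
  shows "\<exists>v. fsq_int x - x = 2^(2*m) * v \<and> odd v"
proof -
  obtain u where "x = 2^m * u" "odd u" using assms by (auto simp: exact_pow2_dvd_def)
  moreover have "(2::int)^(2*m) = 2^m * 2^m" by (simp add: mult_2 power_add)
  ultimately have "fsq_int x - x = 2^(2*m) * (u * u) \<and> odd (u * u)"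
    by (simp add: fsq_int_minus_self algebra_simps)
  then show ?thesis by blast
qed

lemma exact_pow2_dvd_fsq_int:
  assumes "1 \<le> m" "exact_pow2_dvd m x"
  shows "exact_pow2_dvd m (fsq_int x)"
proof -
  obtain u where u: "x = 2^m * u" "odd u" using assms(2) by (auto simp: exact_pow2_dvd_def)
  have "fsq_int x = 2^m * (u + 2^m * u * u)" by (simp add: u fsq_int_def algebra_simps)
  moreover have "odd (u + 2^m * u * u)" using u(2) assms(1) by simp
  ultimately show ?thesis unfolding exact_pow2_dvd_def by blast
qed

lemma exact_pow2_dvd_funpow_fsq_int:
  "1 \<le> m \<Longrightarrow> exact_pow2_dvd m x \<Longrightarrow> exact_pow2_dvd m ((fsq_int^^j) x)"
  by (induction j) (simp_all add: exact_pow2_dvd_fsq_int)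

lemma even_funpow_fsq_int: "even x \<Longrightarrow> even ((fsq_int^^j) x)"
  by (cases j) (simp_all add: fsq_int_def)

text \<open>The derivative 2X + 1 of f is 1 modulo 4 at even X.\<close>
lemma funpow_fsq_int_diff:
  assumes "even x" "4 dvd d"
  shows "4 * d dvd (fsq_int^^j) (x + d) - (fsq_int^^j) x - d"
proof (induction j)
  case 0
  then show ?case by simp
next
  case (Suc j)
  define X where "X = (fsq_int^^j) x"
  define D where "D = (fsq_int^^j) (x + d) - X"
  obtain e where "D - d = 4 * d * e"
    using Suc.IH unfolding D_def X_def by (auto elim: dvdE)
  then have e: "D = d + 4 * d * e" by simp
  obtain s where s: "X = 2 * s" using even_funpow_fsq_int[OF assms(1)] unfolding X_def by blast
  obtain r where r: "d = 4 * r" using assms(2) by blast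
  have "(fsq_int^^Suc j) (x + d) - (fsq_int^^Suc j) x - d = fsq_int (X + D) - fsq_int X - d"
    by (simp add: X_def D_def)
  also have "\<dots> = 4 * d * (e + (1 + 4 * e) * (s + r + d * e))"
    by (simp add: fsq_int_def e s r algebra_simps)
  finally show ?case by simp
qed

lemma funpow_pow2_fsq_int_displacement:
  assumes "1 \<le> m" "exact_pow2_dvd m x"
  shows "\<exists>v. (fsq_int^^(2^k)) x - x = 2^(2*m + k) * v \<and> odd v"
  using assms(2)
proof (induction k arbitrary: x)
  case 0
  then show ?case using fsq_int_displacement by simp
next
  case (Suc k)
  define h where "h = fsq_int^^(2^k)"
  obtain v where v: "h x - x = 2^(2*m + k) * v" "odd v"
    using Suc.IH[OF Suc.prems] unfolding h_def by blast
  have "exact_pow2_dvd m (h x)"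
    unfolding h_def using exact_pow2_dvd_funpow_fsq_int[OF assms(1) Suc.prems] .
  then obtain v' where v': "h (h x) - h x = 2^(2*m + k) * v'"
    using Suc.IH unfolding h_def by blast
  have "even x" using Suc.prems assms(1) by (auto simp: exact_pow2_dvd_def)
  moreover have "(4::int) dvd 2^(2*m + k)"
    using le_imp_power_dvd[of 2 "2*m + k" "2::int"] assms(1) by simp
  then have "4 dvd h x - x" using v(1) by simp
  ultimately have "4 * (h x - x) dvd h (x + (h x - x)) - h x - (h x - x)"
    unfolding h_def by (rule funpow_fsq_int_diff)
  then have "(2^(2*m + k) * 4) * v dvd 2^(2*m + k) * (v' - v)"
    using v v' by (simp add: algebra_simps)
  then have "2^(2*m + k) * 4 dvd 2^(2*m + k) * (v' - v)"
    using dvd_mult_left by blast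
  then have "4 dvd v' - v" by simp
  then obtain w where "v' - v = 4 * w" by (elim dvdE)
  then have w: "v' = v + 4 * w" by simp
  have "(fsq_int^^(2^Suc k)) x - x = h (h x) - x"
    unfolding h_def by (simp add: funpow_add mult_2)
  also have "\<dots> = (h (h x) - h x) + (h x - x)" by simp
  also have "\<dots> = 2^(2*m + Suc k) * (v + 2 * w)"
    unfolding v v' w by (simp add: algebra_simps)
  finally show ?case using v(2) by auto
qed

lemma funpow_fsq_int_reaches:
  assumes "1 \<le> m" "exact_pow2_dvd m x" "x mod 2^(2*m) = y mod 2^(2*m)"
  shows "\<exists>j. (fsq_int^^j) x mod 2^(2*m + k) = y mod 2^(2*m + k)"
proof (induction k)
  case 0
  show ?case using assms(3) by (intro exI[of _ 0]) simp
next
  case (Suc k)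
  then obtain j where j: "(fsq_int^^j) x mod 2^(2*m + k) = y mod 2^(2*m + k)" by blast
  define z where "z = (fsq_int^^j) x"
  obtain e where e: "z - y = 2^(2*m + k) * e"
    using j unfolding z_def by (auto simp: mod_eq_dvd_iff elim: dvdE)
  show ?case
  proof (cases "even e")
    case True
    then obtain e' where "z - y = 2^(2*m + Suc k) * e'" using e by (auto elim: evenE)
    then have "z mod 2^(2*m + Suc k) = y mod 2^(2*m + Suc k)" by (simp add: mod_eq_dvd_iff)
    then show ?thesis unfolding z_def by blast
  next
    case False
    have "exact_pow2_dvd m z"
      unfolding z_def using exact_pow2_dvd_funpow_fsq_int[OF assms(1,2)] .
    then obtain v where v: "(fsq_int^^(2^k)) z - z = 2^(2*m + k) * v" "odd v"
      using funpow_pow2_fsq_int_displacement[OF assms(1)] by blast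
    obtain g where g: "e + v = 2 * g" using False v(2) by (metis odd_add evenE)
    have "(fsq_int^^(2^k + j)) x - y = ((fsq_int^^(2^k)) z - z) + (z - y)"
      unfolding z_def by (simp add: funpow_add)
    also have "\<dots> = 2^(2*m + k) * (e + v)" by (simp only: v(1) e algebra_simps)
    also have "\<dots> = 2^(2*m + Suc k) * g" by (simp add: g)
    finally have "(fsq_int^^(2^k + j)) x mod 2^(2*m + Suc k) = y mod 2^(2*m + Suc k)"
      by (simp add: mod_eq_dvd_iff)
    then show ?thesis by blast
  qed
qed

lemma fsq_int_mod: "fsq_int (u mod m) mod m = fsq_int u mod m"
  unfolding fsq_int_def by (rule mod_add_cong) (simp_all add: mod_mult_eq)

lemma res_fsq: "res (fsq x) n = fsq_int (res x n) mod 2^n"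
  by (simp add: fsq_def fsq_int_def mod_add_left_eq)

lemma res_funpow_fsq: "res ((fsq^^k) x) n = (fsq_int^^k) (res x n) mod 2^n"
  by (induction k) (simp_all add: res_fsq fsq_int_mod)

lemma exact_pow2_dvd_mod_eq:
  assumes "1 \<le> m" "exact_pow2_dvd m a" "b mod 2^(2*m) = a mod 2^(2*m)"
  shows "exact_pow2_dvd m b"
proof -
  obtain u where u: "a = 2^m * u" "odd u" using assms(2) by (auto simp: exact_pow2_dvd_def)
  obtain q where "b - a = 2^(2*m) * q" using assms(3) by (auto simp: mod_eq_dvd_iff elim: dvdE)
  moreover have "(2::int)^(2*m) = 2^m * 2^m" by (simp add: mult_2 power_add)
  ultimately have "b = 2^m * (u + 2^m * q)" by (simp add: u algebra_simps)
  moreover have "odd (u + 2^m * q)" using u(2) assms(1) by simp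
  ultimately show ?thesis unfolding exact_pow2_dvd_def by blast
qed

lemma funpow_fsq_int_mod:
  assumes "1 \<le> m" "exact_pow2_dvd m x"
  shows "(fsq_int^^j) x mod 2^(2*m) = x mod 2^(2*m)"
proof (induction j)
  case 0
  show ?case by simp
next
  case (Suc j)
  obtain v where "fsq_int ((fsq_int^^j) x) - (fsq_int^^j) x = 2^(2*m) * v"
    using fsq_int_displacement exact_pow2_dvd_funpow_fsq_int[OF assms] by blast
  then have "fsq_int ((fsq_int^^j) x) mod 2^(2*m) = (fsq_int^^j) x mod 2^(2*m)"
    by (simp add: mod_eq_dvd_iff)
  then show ?case using Suc.IH by simp
qed

lemma z2_clopen_res_eq: "z2_clopen {z. res z n = a}"
  unfolding z2_clopen_def z2_open_def by (auto intro!: exI[of _ n])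

lemma minimal_component_coset:
  assumes m: "1 \<le> m" and a: "exact_pow2_dvd m a"
  shows "minimal_component fsq (coset a (2*m))"
proof -
  let ?M = "2*m"
  have in_class: "exact_pow2_dvd m (res z (?M + N))" if "z \<in> coset a ?M" for z N
    using that res_mod_pow2[of ?M "?M + N" z]
    by (intro exact_pow2_dvd_mod_eq[OF m a]) (simp add: coset_eq)
  have orbit_in: "(fsq^^k) z \<in> coset a ?M" if "z \<in> coset a ?M" for z k
    using that funpow_fsq_int_mod[OF m in_class[OF that, of 0]]
    by (simp add: coset_eq res_funpow_fsq)
  have dense: "\<exists>j. res ((fsq^^j) x) N = res y N"
    if "x \<in> coset a ?M" "y \<in> coset a ?M" for x y N
  proof -
    have "res x (?M + N) mod 2^?M = res y (?M + N) mod 2^?M"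
      using that by (simp add: res_mod_pow2 coset_eq)
    from funpow_fsq_int_reaches[OF m in_class[OF that(1)] this] obtain j where
      "(fsq_int^^j) (res x (?M + N)) mod 2^(?M + N) = res y (?M + N) mod 2^(?M + N)"
      by blast
    then have "res ((fsq^^j) x) (?M + N) = res y (?M + N)" by (simp add: res_funpow_fsq)
    then have "res ((fsq^^j) x) (?M + N) mod 2^N = res y (?M + N) mod 2^N" by simp
    then show ?thesis by (auto simp: res_mod_pow2)
  qed
  show ?thesis
    unfolding minimal_component_def z2_dense_in_def orbit_def
  proof (intro conjI ballI allI subsetI)
    show "z2_clopen (coset a ?M)" unfolding coset_eq by (rule z2_clopen_res_eq)
    show "w \<in> coset a ?M" if "w \<in> fsq ` coset a ?M" for w
      using that orbit_in[of _ 1] by auto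
    show "w \<in> coset a ?M" if "x \<in> coset a ?M" "w \<in> {(fsq^^k) x |k. True}" for x w
      using that orbit_in by auto
    show "\<exists>s\<in>{(fsq^^k) x |k. True}. res s N = res y N"
      if "x \<in> coset a ?M" "y \<in> coset a ?M" for x y N
      using dense[OF that] by blast
  qed
qed

lemma coset_eq_res_eq: "0 \<le> a \<Longrightarrow> a < 2^n \<Longrightarrow> coset a n = {z. res z n = a}"
  by (simp add: coset_eq)

lemma add_mult_pow2_less:
  fixes a :: int
  assumes "a < 2^n" "t < 2^k"
  shows "a + int t * 2^n < 2^(n + k)"
proof -
  have t: "int t + 1 \<le> 2^k"
    using assms(2) by (metis of_nat_Suc of_nat_le_iff of_nat_numeral of_nat_power Suc_leI add.commute)
  have "a + int t * 2^n < (int t + 1) * 2^n" using assms(1) by (simp add: algebra_simps)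
  also have "\<dots> \<le> 2^k * 2^n" using t by (intro mult_right_mono) simp_all
  finally show ?thesis by (simp add: power_add mult.commute)
qed

lemma coset_split:
  assumes a: "0 \<le> a" "a < 2^n"
  shows "coset a n = (\<Union>t\<in>{0..<2^k}. coset (a + int t * 2^n) (n + k))"
proof (intro set_eqI iffI)
  fix z assume "z \<in> coset a n"
  then have "res z (n + k) mod 2^n = a" using a by (simp add: coset_eq res_mod_pow2)
  then have r: "res z (n + k) = a + (res z (n + k) div 2^n) * 2^n"
    by (metis add.commute div_mult_mod_eq)
  define t where "t = nat (res z (n + k) div 2^n)"
  have "int t = res z (n + k) div 2^n"
    unfolding t_def by (simp add: res_nonneg pos_imp_zdiv_nonneg_iff)
  with r have r': "res z (n + k) = a + int t * 2^n" by simp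
  have "int t * 2^n < 2^(n + k)" using r' res_less[of z "n + k"] a(1) by linarith
  then have "t < 2^k" by (simp add: power_add mult.commute)
  moreover have "res z (n + k) = (a + int t * 2^n) mod 2^(n + k)"
    using r' by (metis res_mod)
  ultimately show "z \<in> (\<Union>t\<in>{0..<2^k}. coset (a + int t * 2^n) (n + k))"
    by (auto simp: coset_eq)
next
  fix z assume "z \<in> (\<Union>t\<in>{0..<2^k}. coset (a + int t * 2^n) (n + k))"
  then obtain t where "res z (n + k) = (a + int t * 2^n) mod 2^(n + k)" by (auto simp: coset_eq)
  then have "res z n = (a + int t * 2^n) mod 2^(n + k) mod 2^n" by (metis res_mod_pow2 le_add1)
  also have "\<dots> = a" using a by (simp add: mod_mod_cancel le_imp_power_dvd)
  finally show "z \<in> coset a n" using a by (simp add: coset_eq_res_eq)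
qed

lemma coset_split_disjoint:
  assumes a: "0 \<le> a" "a < 2^n" and t: "t < 2^k" "t' < 2^k" "t \<noteq> t'"
  shows "coset (a + int t * 2^n) (n + k) \<inter> coset (a + int t' * 2^n) (n + k) = {}"
  using add_mult_pow2_less[OF a(2) t(1)] add_mult_pow2_less[OF a(2) t(2)] a t(3)
  by (auto simp: coset_eq_res_eq)

lemma coset_pow2_eq: "1 \<le> n \<Longrightarrow> coset (2^(n-1)) n = {z. res z n = 2^(n-1)}"
  by (rule coset_eq_res_eq) (simp_all add: power_strict_increasing)

lemma coset_pow2_disjoint:
  assumes "1 \<le> n" "n < m"
  shows "coset (2^(n-1)) n \<inter> coset (2^(m-1)) m = {}"
proof -
  have "res z n = 0" if "res z m = 2^(m-1)" for z
    using that res_mod_pow2[of n m z] assms le_imp_power_dvd[of n "m-1" "2::int"] by simp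
  then show ?thesis using assms coset_pow2_eq[of n] coset_pow2_eq[of m] by auto
qed

lemma res_Suc_eq_pow2:
  assumes "res z k = 0" "res z (Suc k) \<noteq> 0"
  shows "res z (Suc k) = 2^k"
proof -
  obtain c where c: "res z (Suc k) = 2^k * c"
    using res_Suc_mod[of z k] assms(1) by (auto simp: dvd_eq_mod_eq_0[symmetric] elim: dvdE)
  have "0 \<le> c" "c < 2" "c \<noteq> 0"
    using res_nonneg[of z "Suc k"] res_less[of z "Suc k"] assms(2)
    by (simp_all add: c zero_le_mult_iff mult.commute)
  then show ?thesis using c by simp
qed

lemma coset_0_1_eq:
  "coset 0 1 = {z2_of_int 0} \<union> (\<Union>n\<in>{2..}. coset (2^(n-1)) n)"
proof (intro set_eqI iffI)
  fix z assume z: "z \<in> coset 0 1"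
  show "z \<in> {z2_of_int 0} \<union> (\<Union>n\<in>{2..}. coset (2^(n-1)) n)"
  proof (cases "z = z2_of_int 0")
    case False
    then have ex: "\<exists>N. res z N \<noteq> 0" using z2_eqI[of z "z2_of_int 0"] by auto
    define n where "n = (LEAST N. res z N \<noteq> 0)"
    have "res z n \<noteq> 0" unfolding n_def by (rule LeastI_ex[OF ex])
    moreover have "res z N = 0" if "N < n" for N
      using not_less_Least[of N "\<lambda>N. res z N \<noteq> 0"] that unfolding n_def by simp
    moreover have "res z 0 = 0" "res z 1 = 0"
      using res_nonneg[of z 0] res_less[of z 0] z by (auto simp: coset_eq)
    ultimately obtain k where k: "n = Suc k" "1 \<le> k" "res z k = 0" "res z (Suc k) \<noteq> 0"
      by (metis One_nat_def lessI less_one not0_implies_Suc not_less)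
    then have "z \<in> coset (2^(n-1)) n" using res_Suc_eq_pow2 coset_pow2_eq[of n] by simp
    moreover have "n \<in> {2..}" using k by simp
    ultimately show ?thesis by blast
  qed simp
next
  fix z assume "z \<in> {z2_of_int 0} \<union> (\<Union>n\<in>{2..}. coset (2^(n-1)) n)"
  then consider "z = z2_of_int 0" | n where "2 \<le> n" "res z n = 2^(n-1)"
    using coset_pow2_eq by fastforce
  then show "z \<in> coset 0 1"
  proof cases
    case 2
    then have "res z 1 = 2^(n-1) mod 2" using res_mod_pow2[of 1 n z] by simp
    then show ?thesis using 2(1) by (simp add: coset_eq)
  qed (simp add: coset_eq)
qed

theorem theoremE:
  shows "(fsq (z2_of_int 0) = z2_of_int 0) \<and>
        (fsq ` coset 1 1 \<subseteq> coset 0 1) \<and>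
        (coset 0 1 = {z2_of_int 0} \<union> (\<Union>n\<in>{2..}. coset (2^(n-1)) n)) \<and>
        (z2_of_int 0 \<notin> (\<Union>n\<in>{2..}. coset (2^(n-1)) n)) \<and>
        (\<forall>n m. 2 \<le> n \<longrightarrow> 2 \<le> m \<longrightarrow> n \<noteq> m \<longrightarrow>
           coset (2^(n-1)) n \<inter> coset (2^(m-1)) m = {}) \<and>
        (\<forall>n\<ge>2. coset (2^(n-1)) n =
           (\<Union>t\<in>{0..<2^(n-2)}. coset (2^(n-1) + int t * 2^n) (2*n-2))) \<and>
        (\<forall>n\<ge>2. \<forall>t\<in>{0..<2^(n-2)}. \<forall>t'\<in>{0..<2^(n-2)}. t \<noteq> t' \<longrightarrow>
           coset (2^(n-1) + int t * 2^n) (2*n-2) \<inter> coset (2^(n-1) + int t' * 2^n) (2*n-2) = {}) \<and>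
        (\<forall>n\<ge>2. \<forall>t\<in>{0..<2^(n-2)}.
           minimal_component fsq (coset (2^(n-1) + int t * 2^n) (2*n-2)))"
proof (intro conjI allI impI ballI)
  show "fsq (z2_of_int 0) = z2_of_int 0" by (rule z2_eqI) (simp add: res_fsq fsq_int_def)
  show "fsq ` coset 1 1 \<subseteq> coset 0 1" by (auto simp: coset_eq res_fsq fsq_int_def)
  show "coset 0 1 = {z2_of_int 0} \<union> (\<Union>n\<in>{2..}. coset (2^(n-1)) n)" by (rule coset_0_1_eq)
  show "z2_of_int 0 \<notin> (\<Union>n\<in>{2..}. coset (2^(n-1)) n)" using coset_pow2_eq by fastforce
  show "coset (2^(n-1)) n \<inter> coset (2^(m-1)) m = {}" if "2 \<le> n" "2 \<le> m" "n \<noteq> m" for n m :: nat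
    using that coset_pow2_disjoint[of n m] coset_pow2_disjoint[of m n] by (cases "n < m") auto
next
  fix n t t' :: nat
  assume n: "2 \<le> n"
  then have split: "2*n - 2 = n + (n - 2)" and halve: "2*n - 2 = 2 * (n - 1)" by simp_all
  have a: "0 \<le> (2::int)^(n-1)" "(2::int)^(n-1) < 2^n" using n by (simp_all add: power_strict_increasing)
  show "coset (2^(n-1)) n = (\<Union>t\<in>{0..<2^(n-2)}. coset (2^(n-1) + int t * 2^n) (2*n-2))"
    unfolding split by (rule coset_split[OF a])
  show "coset (2^(n-1) + int t * 2^n) (2*n-2) \<inter> coset (2^(n-1) + int t' * 2^n) (2*n-2) = {}"
    if "t \<in> {0..<2^(n-2)}" "t' \<in> {0..<2^(n-2)}" "t \<noteq> t'"
    using that unfolding split by (intro coset_split_disjoint[OF a]) simp_all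
  have "(2::int)^(n-1) + int t * 2^n = 2^(n-1) * (1 + 2 * int t)"
    using n by (simp add: algebra_simps power_Suc[symmetric])
  then have "exact_pow2_dvd (n-1) (2^(n-1) + int t * 2^n)"
    unfolding exact_pow2_dvd_def by auto
  then show "minimal_component fsq (coset (2^(n-1) + int t * 2^n) (2*n-2))"
    unfolding halve using n by (intro minimal_component_coset) simp_all
qed

end
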